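(* Let $\mathcal H,\mathcal K$ be finite-dimensional Hilbert spaces, $\mathcal A\subseteq\mathcal L(\mathcal H)$ and $\mathcal B\subseteq\mathcal L(\mathcal K)$ Von Neumann algebras, and $U:\mathcal H\to\mathcal K$ a unitary. Then $U$ is Heisenberg semi-causal from $\mathcal A$ to $\mathcal B$, i.e. $[U^\dagger BU,A]=0$ for all $B\in\mathcal B$ and $A\in\mathcal A$, if and only if the unitary channel $\rho\mapsto U\rho U^\dagger$ is Schrödinger semi-causal from $\mathcal A$ to $\mathcal B$.
   Context: A Von Neumann algebra on $\mathcal H$ is a $*$-subalgebra of $\mathcal L(\mathcal H)$ closed under adjoint and containing $\mathbb 1$; $\mathcal C'$ denotes its commutant. Partial trace over a Von Neumann algebra $\mathcal C\subseteq\mathcal L(\mathcal H)$: take a unitary $V:\mathcal H\to\bigoplus_i(\mathcal H_L^i\otimes\mathcal H_R^i)$ with $V\mathcal C'V^\dagger=\bigoplus_i\mathcal L(\mathcal H_L^i)\otimes\mathbb 1_{\mathcal H_R^i}$ (so $V\mathcal CV^\dagger=\bigoplus_i\mathbb 1\otimes\mathcal L(\mathcal H_R^i)$); identifying $\mathcal H$ with $\bigoplus_i(\mathcal H_L^i\otimes\mathcal H_R^i)$, $\mathrm{Tr}_{\mathcal C}(X)=\bigoplus_i\mathrm{Tr}_{\mathcal H_R^i}(\pi_iX\pi_i)\in\bigoplus_i\mathcal L(\mathcal H_L^i)$, with $\pi_i$ the projector onto $\mathcal H_L^i\otimes\mathcal H_R^i$. A channel $\mathcal E:\mathcal L(\mathcal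 H)\to\mathcal L(\mathcal K)$ is Schrödinger semi-causal from $\mathcal A$ to $\mathcal B$ if there exists a completely positive trace-preserving map $\mathcal E'$ (from the codomain of $\mathrm{Tr}_{\mathcal A}$ to that of $\mathrm{Tr}_{\mathcal B'}$) such that $\mathrm{Tr}_{\mathcal B'}[\mathcal E(\rho)]=\mathcal E'(\mathrm{Tr}_{\mathcal A}[\rho])$ for all $\rho\in\mathcal L(\mathcal H)$. *)

theory Defs
  imports "Jordan_Normal_Form.Schur_Decomposition"
begin

text \<open>Finite-dimensional Hilbert spaces are modelled as complex n-space; operators
  H -> K as complex matrices in carrier_mat (dim K) (dim H); the adjoint is
  mat_adjoint from Jordan_Normal_Form.\<close>

definition mtrace :: "complex mat \<Rightarrow> complex" where
  "mtrace M = (\<Sum>i<dim_row M. M $$ (i, i))"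

definition unitary_mat :: "nat \<Rightarrow> nat \<Rightarrow> complex mat \<Rightarrow> bool" where
  "unitary_mat m n U \<longleftrightarrow> U \<in> carrier_mat m n \<and>
     mat_adjoint U * U = 1\<^sub>m n \<and> U * mat_adjoint U = 1\<^sub>m m"

definition vN_algebra :: "nat \<Rightarrow> complex mat set \<Rightarrow> bool" where
  "vN_algebra n C \<longleftrightarrow> C \<subseteq> carrier_mat n n \<and> 1\<^sub>m n \<in> C \<and>
     (\<forall>X\<in>C. \<forall>Y\<in>C. X + Y \<in> C \<and> X * Y \<in> C) \<and>
     (\<forall>c. \<forall>X\<in>C. c \<cdot>\<^sub>m X \<in> C) \<and>
     (\<forall>X\<in>C. mat_adjoint X \<in> C)"

definition commutant :: "nat \<Rightarrow> complex mat set \<Rightarrow> complex mat set" where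
  "commutant n C = {X \<in> carrier_mat n n. \<forall>Y\<in>C. X * Y = Y * X}"

text \<open>Kronecker (tensor) product; index (a,b) of C^p (x) C^r corresponds to a*r+b.\<close>
definition kron :: "complex mat \<Rightarrow> complex mat \<Rightarrow> complex mat" where
  "kron A B = mat (dim_row A * dim_row B) (dim_col A * dim_col B)
     (\<lambda>(i, j). A $$ (i div dim_row B, j div dim_col B) * B $$ (i mod dim_row B, j mod dim_col B))"

definition ptrace_R :: "nat \<Rightarrow> nat \<Rightarrow> complex mat \<Rightarrow> complex mat" where
  "ptrace_R dL dR M = mat dL dL (\<lambda>(a, a'). \<Sum>b<dR. M $$ (a * dR + b, a' * dR + b))"

text \<open>Diagonal block of size d starting at offset off (i.e. pi_i X pi_i restricted to its range).\<close>
definition diag_block :: "nat \<Rightarrow> nat \<Rightarrow> complex mat \<Rightarrow> complex mat" where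
  "diag_block off d X = mat d d (\<lambda>(a, b). X $$ (off + a, off + b))"

text \<open>Decomposition data: ds lists the pairs (dim H_L^i, dim H_R^i); V : C^n -> (+)_i H_L^i (x) H_R^i
  unitary with V C' V^dagger = (+)_i L(H_L^i) (x) 1.\<close>
definition vN_decomposition :: "nat \<Rightarrow> complex mat set \<Rightarrow> complex mat \<Rightarrow> (nat \<times> nat) list \<Rightarrow> bool" where
  "vN_decomposition n C V ds \<longleftrightarrow>
     unitary_mat n n V \<and> (\<forall>(dL, dR) \<in> set ds. 0 < dL \<and> 0 < dR) \<and>
     sum_list (map (\<lambda>(dL, dR). dL * dR) ds) = n \<and>
     (\<lambda>X. V * X * mat_adjoint V) ` commutant n C =
       {diag_block_mat (map (\<lambda>i. kron (Ls ! i) (1\<^sub>m (snd (ds ! i)))) [0..<length ds]) | Ls.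
          length Ls = length ds \<and> (\<forall>i<length ds. Ls ! i \<in> carrier_mat (fst (ds ! i)) (fst (ds ! i)))}"

definition block_offset :: "(nat \<times> nat) list \<Rightarrow> nat \<Rightarrow> nat" where
  "block_offset ds i = sum_list (map (\<lambda>(dL, dR). dL * dR) (take i ds))"

text \<open>Tr_C(X), with (+)_i L(H_L^i) represented as block-diagonal matrices.\<close>
definition partial_trace_vN :: "complex mat \<Rightarrow> (nat \<times> nat) list \<Rightarrow> complex mat \<Rightarrow> complex mat" where
  "partial_trace_vN V ds X = diag_block_mat (map (\<lambda>i. let (dL, dR) = ds ! i in
      ptrace_R dL dR (diag_block (block_offset ds i) (dL * dR) (V * X * mat_adjoint V))) [0..<length ds])"

text \<open>The algebra (+)_i L(C^(d_i)) as block-diagonal matrices.\<close>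
definition block_alg :: "nat list \<Rightarrow> complex mat set" where
  "block_alg ds = {diag_block_mat Ms | Ms. length Ms = length ds \<and>
      (\<forall>i<length ds. Ms ! i \<in> carrier_mat (ds ! i) (ds ! i))}"

definition psd :: "complex mat \<Rightarrow> bool" where
  "psd M \<longleftrightarrow> dim_row M = dim_col M \<and>
     (\<forall>v \<in> carrier_vec (dim_row M). let q = conjugate v \<bullet> (M *\<^sub>v v) in Im q = 0 \<and> 0 \<le> Re q)"

text \<open>(k x k) block (i,j) of size D, and id_k (x) Phi on M_k(M_D).\<close>
definition sub_block :: "nat \<Rightarrow> nat \<Rightarrow> nat \<Rightarrow> complex mat \<Rightarrow> complex mat" where
  "sub_block D i j X = mat D D (\<lambda>(a, b). X $$ (i * D + a, j * D + b))"

definition ampliate :: "nat \<Rightarrow> nat \<Rightarrow> nat \<Rightarrow> (complex mat \<Rightarrow> complex mat) \<Rightarrow> complex mat \<Rightarrow> complex mat" where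
  "ampliate k D D' \<Phi> X = mat (k * D') (k * D')
     (\<lambda>(p, q). \<Phi> (sub_block D (p div D') (q div D') X) $$ (p mod D', q mod D'))"

definition cptp_map :: "nat list \<Rightarrow> nat list \<Rightarrow> (complex mat \<Rightarrow> complex mat) \<Rightarrow> bool" where
  "cptp_map ds es \<Phi> \<longleftrightarrow>
     (\<forall>X\<in>block_alg ds. \<Phi> X \<in> block_alg es) \<and>
     (\<forall>X\<in>block_alg ds. \<forall>Y\<in>block_alg ds. \<forall>c a. \<Phi> (c \<cdot>\<^sub>m X + a \<cdot>\<^sub>m Y) = c \<cdot>\<^sub>m \<Phi> X + a \<cdot>\<^sub>m \<Phi> Y) \<and>
     (\<forall>X\<in>block_alg ds. mtrace (\<Phi> X) = mtrace X) \<and>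
     (\<forall>k X. X \<in> carrier_mat (k * sum_list ds) (k * sum_list ds) \<longrightarrow>
        (\<forall>i<k. \<forall>j<k. sub_block (sum_list ds) i j X \<in> block_alg ds) \<longrightarrow> psd X \<longrightarrow>
        psd (ampliate k (sum_list ds) (sum_list es) \<Phi> X))"

definition heisenberg_semicausal :: "complex mat \<Rightarrow> complex mat set \<Rightarrow> complex mat set \<Rightarrow> bool" where
  "heisenberg_semicausal U A B \<longleftrightarrow>
     (\<forall>Bo\<in>B. \<forall>Ao\<in>A. (mat_adjoint U * Bo * U) * Ao = Ao * (mat_adjoint U * Bo * U))"

text \<open>Schroedinger semi-causality of a channel E : L(C^n) -> L(C^m) from A to B,
  relative to decomposition data (VA, dsA) for A and (VB, dsB) for B'.\<close>
definition schroedinger_semicausal ::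
  "nat \<Rightarrow> (complex mat \<Rightarrow> complex mat) \<Rightarrow> complex mat \<Rightarrow> (nat \<times> nat) list \<Rightarrow> complex mat \<Rightarrow> (nat \<times> nat) list \<Rightarrow> bool" where
  "schroedinger_semicausal n E VA dsA VB dsB \<longleftrightarrow>
     (\<exists>E'. cptp_map (map fst dsA) (map fst dsB) E' \<and>
        (\<forall>\<rho> \<in> carrier_mat n n. partial_trace_vN VB dsB (E \<rho>) = E' (partial_trace_vN VA dsA \<rho>)))"

end

theory Submission
  imports Defs
begin

text \<open>The partial trace over a von Neumann algebra C is dual to its commutant: \<open>Tr\<^sub>C X = 0\<close> iff
  \<open>tr (D X) = 0\<close> for all \<open>D \<in> C'\<close> (test X against the element of C' whose blocks are the adjoints
  of the blocks of \<open>Tr\<^sub>C X\<close>).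

  Schroedinger implies Heisenberg: for \<open>Ao \<in> A\<close> and \<open>Bo \<in> B\<close> put \<open>H = U\<dagger> Bo U\<close>. Every commutator
  \<open>X = [Ao, \<rho>]\<close> is orthogonal to A', so \<open>Tr\<^sub>A X = 0\<close> and hence \<open>Tr\<^sub>B\<^sub>' (U X U\<dagger>) = E' 0 = 0\<close>; as
  \<open>Bo \<in> B''\<close>, this gives \<open>tr ([H, Ao] \<rho>) = tr (Bo U X U\<dagger>) = 0\<close>, and \<open>\<rho> = [H, Ao]\<dagger>\<close> yields \<open>[H, Ao] = 0\<close>.

  Heisenberg implies Schroedinger: now \<open>U\<dagger> B'' U \<subseteq> A'\<close>, so by duality \<open>Tr\<^sub>B\<^sub>' (U \<rho> U\<dagger>)\<close> depends on \<rho>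
  only through \<open>Tr\<^sub>A \<rho>\<close>. Tensoring each block of \<open>Tr\<^sub>A \<rho>\<close> with the maximally mixed state of \<open>H_R^i\<close>
  gives a state with the same partial trace over A, so \<open>E' = Tr\<^sub>B\<^sub>' \<circ> (U _ U\<dagger>) \<circ> lift\<close> is the
  required channel; it is completely positive as a composition of three Kraus maps.\<close>

declare index_mult_mat(1)[simp del]

lemma mat_adjoint_dim [simp]:
  "dim_row (mat_adjoint A) = dim_col A" "dim_col (mat_adjoint A) = dim_row A"
  unfolding mat_adjoint_def by auto

lemma mat_adjoint_index [simp]:
  "i < dim_col A \<Longrightarrow> j < dim_row A \<Longrightarrow> mat_adjoint (A :: complex mat) $$ (i, j) = cnj (A $$ (j, i))"
  unfolding mat_adjoint_def mat_of_rows_def by simp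

lemma mat_adjoint_carrier [simp]: "A \<in> carrier_mat r c \<Longrightarrow> mat_adjoint A \<in> carrier_mat c r"
  unfolding carrier_mat_def by simp

lemma mat_adjoint_adjoint [simp]: "mat_adjoint (mat_adjoint (A :: complex mat)) = A"
  by (rule eq_matI) auto

lemma index_mult_mat_sum:
  "i < dim_row A \<Longrightarrow> j < dim_col B \<Longrightarrow> dim_col A = dim_row B \<Longrightarrow>
   (A * B) $$ (i, j) = (\<Sum>k<dim_col A. A $$ (i, k) * B $$ (k, j))"
  by (simp add: index_mult_mat(1) scalar_prod_def lessThan_atLeast0)

lemma mat_adjoint_mult:
  "A \<in> carrier_mat r k \<Longrightarrow> B \<in> carrier_mat k c \<Longrightarrow>
   mat_adjoint (A * B :: complex mat) = mat_adjoint B * mat_adjoint A"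
  by (rule eq_matI) (auto simp: index_mult_mat_sum mult.commute)

lemma unitary_cancel_left:
  "V \<in> carrier_mat n n \<Longrightarrow> mat_adjoint V * V = 1\<^sub>m n \<Longrightarrow> Z \<in> carrier_mat n c \<Longrightarrow>
   mat_adjoint V * (V * Z) = (Z :: complex mat)"
  by (simp add: assoc_mult_mat[of _ n n _ n _ c, symmetric])

lemma conj_diff_mat:
  assumes "V \<in> carrier_mat n n" "X \<in> carrier_mat n n" "Y \<in> carrier_mat n n"
  shows "V * (X - Y) * mat_adjoint V = V * X * mat_adjoint V - V * (Y :: complex mat) * mat_adjoint V"
proof -
  have "V * (X - Y) = V * X - V * Y"
    by (rule mult_minus_distrib_mat) (use assms in auto)
  also have "\<dots> * mat_adjoint V = V * X * mat_adjoint V - V * Y * mat_adjoint V"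
    by (rule minus_mult_distrib_mat) (use assms in auto)
  finally show ?thesis .
qed

lemma mat_minus_eq_0_iff:
  assumes "P \<in> carrier_mat r c" "Q \<in> carrier_mat r c"
  shows "P - Q = 0\<^sub>m r c \<longleftrightarrow> P = (Q :: 'a :: ab_group_add mat)"
proof
  assume zero: "P - Q = 0\<^sub>m r c"
  show "P = Q"
  proof (rule eq_matI)
    fix i j assume "i < dim_row Q" "j < dim_col Q"
    then show "P $$ (i, j) = Q $$ (i, j)"
      using arg_cong[OF zero, of "\<lambda>M. M $$ (i, j)"] assms by simp
  qed (use assms in auto)
qed (use assms in simp)

lemma mtrace_mult:
  "A \<in> carrier_mat r c \<Longrightarrow> B \<in> carrier_mat c r \<Longrightarrow>
   mtrace (A * B) = (\<Sum>i<r. \<Sum>k<c. A $$ (i, k) * B $$ (k, i))"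
  unfolding mtrace_def by (simp add: index_mult_mat_sum)

lemma mtrace_mult_comm:
  "A \<in> carrier_mat r c \<Longrightarrow> B \<in> carrier_mat c r \<Longrightarrow> mtrace (A * B) = mtrace (B * A)"
  by (simp add: mtrace_mult sum.swap[of _ "{..<r}"] mult.commute)

lemma mtrace_minus:
  "A \<in> carrier_mat n n \<Longrightarrow> B \<in> carrier_mat n n \<Longrightarrow> mtrace (A - B) = mtrace A - mtrace B"
  unfolding mtrace_def by (simp add: sum_subtractf)

lemma mtrace_mult_adjoint_eq_0:
  assumes A: "A \<in> carrier_mat r c" and tr: "mtrace (A * mat_adjoint A) = 0"
  shows "A = 0\<^sub>m r c"
proof -
  have "(\<Sum>i<r. \<Sum>k<c. A $$ (i, k) * cnj (A $$ (i, k))) = 0"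
    using tr A by (simp add: mtrace_mult)
  then have "(\<Sum>i<r. \<Sum>k<c. complex_of_real ((cmod (A $$ (i, k)))\<^sup>2)) = 0"
    by (simp only: complex_norm_square)
  then have "(\<Sum>i<r. \<Sum>k<c. (cmod (A $$ (i, k)))\<^sup>2) = 0"
    by (simp only: of_real_sum [symmetric] of_real_eq_0_iff)
  then have "\<forall>i<r. \<forall>k<c. (cmod (A $$ (i, k)))\<^sup>2 = 0"
    by (simp add: sum_nonneg_eq_0_iff sum_nonneg)
  then show ?thesis using A by (intro eq_matI) auto
qed

lemma mtrace_commutator:
  assumes A: "A \<in> carrier_mat n n" and B: "B \<in> carrier_mat n n" and R: "R \<in> carrier_mat n n"
  shows "mtrace (A * (B * R - R * B)) = mtrace ((A * B - B * A) * R)"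
proof -
  note assoc = assoc_mult_mat[of _ n n _ n _ n]
  have "A * (B * R - R * B) = A * (B * R) - A * (R * B)"
    by (rule mult_minus_distrib_mat) (use A B R in auto)
  also have "\<dots> = (A * B) * R - (A * R) * B"
    using A B R by (simp add: assoc)
  finally have "A * (B * R - R * B) = (A * B) * R - (A * R) * B" .
  then have "mtrace (A * (B * R - R * B)) = mtrace ((A * B) * R) - mtrace ((A * R) * B)"
    using A B R by (simp add: mtrace_minus[of _ n])
  also have "mtrace ((A * R) * B) = mtrace (B * (A * R))"
    using A B R by (intro mtrace_mult_comm[of _ n n]) auto
  also have "B * (A * R) = (B * A) * R"
    using A B R by (simp add: assoc)
  also have "mtrace ((A * B) * R) - mtrace ((B * A) * R) = mtrace ((A * B - B * A) * R)"
    using A B R by (simp add: minus_mult_distrib_mat[of _ n n] mtrace_minus[of _ n])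
  finally show ?thesis .
qed

lemma mtrace_unitary_conj:
  assumes V: "V \<in> carrier_mat n n" "mat_adjoint V * V = 1\<^sub>m n" and Z: "Z \<in> carrier_mat n n"
  shows "mtrace (V * Z * mat_adjoint V) = mtrace Z"
proof -
  have "mtrace (V * Z * mat_adjoint V) = mtrace ((Z * mat_adjoint V) * V)"
    using V Z by (simp add: assoc_mult_mat[of _ n n _ n _ n] mtrace_mult_comm[of V n n])
  also have "(Z * mat_adjoint V) * V = Z"
    using V Z by (simp add: assoc_mult_mat[of _ n n _ n _ n])
  finally show ?thesis .
qed

lemma mtrace_mult_unitary_conj:
  assumes V: "V \<in> carrier_mat n n" "mat_adjoint V * V = 1\<^sub>m n"
    and D: "D \<in> carrier_mat n n" and X: "X \<in> carrier_mat n n"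
  shows "mtrace ((V * D * mat_adjoint V) * (V * X * mat_adjoint V)) = mtrace (D * X)"
proof -
  have "(V * D * mat_adjoint V) * (V * X * mat_adjoint V) = V * (D * X) * mat_adjoint V"
    using V D X unitary_cancel_left[OF V, of "X * mat_adjoint V" n]
    by (simp add: assoc_mult_mat[of _ n n _ n _ n])
  then show ?thesis using V D X by (simp add: mtrace_unitary_conj)
qed

lemma mtrace_mult_conj:
  assumes "U \<in> carrier_mat n n" "D \<in> carrier_mat n n" "X \<in> carrier_mat n n"
  shows "mtrace (D * (U * X * mat_adjoint U)) = mtrace ((mat_adjoint U * D * U) * X)"
proof -
  have "mtrace (D * (U * X * mat_adjoint U)) = mtrace (((D * U) * X) * mat_adjoint U)"
    using assms by (simp add: assoc_mult_mat[of _ n n _ n _ n])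
  also have "\<dots> = mtrace (mat_adjoint U * ((D * U) * X))"
    using assms by (intro mtrace_mult_comm[of _ n n]) auto
  also have "\<dots> = mtrace ((mat_adjoint U * D * U) * X)"
    using assms by (simp add: assoc_mult_mat[of _ n n _ n _ n])
  finally show ?thesis .
qed

lemma unitary_mat_square: assumes "unitary_mat m n U" shows "m = n"
proof -
  have U: "U \<in> carrier_mat m n" "mat_adjoint U * U = 1\<^sub>m n" "U * mat_adjoint U = 1\<^sub>m m"
    using assms unfolding unitary_mat_def by auto
  have "mtrace (U * mat_adjoint U) = mtrace (mat_adjoint U * U)"
    using U by (intro mtrace_mult_comm[of _ m n]) auto
  then have "(of_nat m :: complex) = of_nat n" using U by (simp add: mtrace_def)
  then show ?thesis by simp
qed

lemma mult_carrier_mat_square [simp]: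
  "A \<in> carrier_mat n n \<Longrightarrow> B \<in> carrier_mat n n \<Longrightarrow> A * B \<in> carrier_mat n n"
  by simp

lemma unitary_matD:
  "unitary_mat n n U \<Longrightarrow> U \<in> carrier_mat n n \<and> mat_adjoint U * U = 1\<^sub>m n \<and> U * mat_adjoint U = 1\<^sub>m n"
  unfolding unitary_mat_def by simp

lemma unitary_mat_adjoint: "unitary_mat n n U \<Longrightarrow> unitary_mat n n (mat_adjoint U)"
  unfolding unitary_mat_def by simp

lemma unitary_mat_mult:
  assumes "unitary_mat n n U" "unitary_mat n n V"
  shows "unitary_mat n n (U * V)"
proof -
  note assoc = assoc_mult_mat[of _ n n _ n _ n]
  have U: "U \<in> carrier_mat n n" "mat_adjoint U * U = 1\<^sub>m n" "U * mat_adjoint U = 1\<^sub>m n"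
    and V: "V \<in> carrier_mat n n" "mat_adjoint V * V = 1\<^sub>m n" "V * mat_adjoint V = 1\<^sub>m n"
    using unitary_matD[OF assms(1)] unitary_matD[OF assms(2)] by auto
  have "mat_adjoint (U * V) * (U * V) = 1\<^sub>m n"
    using U V unitary_cancel_left[OF U(1,2), of V n] by (simp add: mat_adjoint_mult[of _ n n _ n] assoc)
  moreover have "(U * V) * mat_adjoint (U * V) = 1\<^sub>m n"
    using U V unitary_cancel_left[of "mat_adjoint V" n "mat_adjoint U" n]
    by (simp add: mat_adjoint_mult[of _ n n _ n] assoc)
  ultimately show ?thesis using U V unfolding unitary_mat_def by simp
qed

lemma commutant_carrier: "D \<in> commutant n C \<Longrightarrow> D \<in> carrier_mat n n"
  unfolding commutant_def by auto

lemma mem_bicommutant: "C \<subseteq> carrier_mat n n \<Longrightarrow> X \<in> C \<Longrightarrow> X \<in> commutant n (commutant n C)"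
  unfolding commutant_def by auto

definition block_start :: "nat list \<Rightarrow> nat \<Rightarrow> nat" where
  "block_start ds i = sum_list (take i ds)"

lemma block_start_0 [simp]: "block_start ds 0 = 0"
  by (simp add: block_start_def)

lemma block_start_Cons_Suc [simp]: "block_start (d # ds) (Suc i) = d + block_start ds i"
  by (simp add: block_start_def)

lemma block_start_mono: "i < j \<Longrightarrow> j \<le> length ds \<Longrightarrow> block_start ds i + ds ! i \<le> block_start ds j"
proof -
  assume ij: "i < j" "j \<le> length ds"
  have "take j ds = take (Suc i) ds @ drop (Suc i) (take j ds)"
    using ij by (metis append_take_drop_id min.absorb1 Suc_leI take_take)
  then have "block_start ds j = block_start ds (Suc i) + sum_list (drop (Suc i) (take j ds))"
    unfolding block_start_def by (metis sum_list_append)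
  moreover have "block_start ds (Suc i) = block_start ds i + ds ! i"
    using ij unfolding block_start_def by (simp add: take_Suc_conv_app_nth)
  ultimately show ?thesis by simp
qed

lemma block_start_add_less: "i < length ds \<Longrightarrow> a < ds ! i \<Longrightarrow> block_start ds i + a < sum_list ds"
  using block_start_mono[of i "length ds" ds] by (simp add: block_start_def)

lemma block_start_add_eq_iff:
  assumes "i < length ds" "j < length ds" "a < ds ! i" "b < ds ! j"
  shows "block_start ds i + a = block_start ds j + b \<longleftrightarrow> i = j \<and> a = b"
proof -
  have "i < j \<Longrightarrow> block_start ds i + a < block_start ds j + b"
    and "j < i \<Longrightarrow> block_start ds j + b < block_start ds i + a"
    using block_start_mono[of i j ds] block_start_mono[of j i ds] assms by simp_all
  then show ?thesis by (cases i j rule: linorder_cases) auto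
qed

lemma lessThan_sum_listE:
  assumes "p < sum_list ds"
  obtains i a where "i < length ds" "a < ds ! i" "p = block_start ds i + a"
  using assms
proof (induction ds arbitrary: p thesis)
  case (Cons d ds)
  show ?case
  proof (cases "p < d")
    case True
    then show ?thesis using Cons.prems(1)[of 0 p] by simp
  next
    case False
    then have "p - d < sum_list ds" using Cons.prems(2) by simp
    then obtain i a where "i < length ds" "a < ds ! i" "p - d = block_start ds i + a"
      using Cons.IH[of "p - d"] by blast
    then show ?thesis using Cons.prems(1)[of "Suc i" a] False by simp
  qed
qed simp

lemma sum_lessThan_add:
  "(\<Sum>p<(d :: nat) + e. f p) = (\<Sum>p<d. f p) + (\<Sum>p<e. f (d + p) :: 'a :: comm_monoid_add)"
  by (induction e) (simp_all add: add.assoc)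

lemma sum_lessThan_sum_list:
  "(\<Sum>p<sum_list ds. f p) = (\<Sum>i<length ds. \<Sum>a<ds ! i. f (block_start ds i + a) :: 'a :: comm_monoid_add)"
proof (induction ds arbitrary: f)
  case (Cons d ds)
  show ?case
    by (simp add: sum_lessThan_add Cons sum.lessThan_Suc_shift add.assoc del: sum.lessThan_Suc)
qed simp

lemma mult_add_less: "a < dL \<Longrightarrow> b < dR \<Longrightarrow> a * dR + b < dL * (dR :: nat)"
proof -
  assume "a < dL" "b < dR"
  then have "a * dR + b < Suc a * dR" by simp
  also have "\<dots> \<le> dL * dR" using \<open>a < dL\<close> by (intro mult_right_mono) auto
  finally show ?thesis .
qed

lemma mult_add_eq_iff: "b < d \<Longrightarrow> b' < d \<Longrightarrow> a * d + b = a' * d + b' \<longleftrightarrow> a = a' \<and> b = (b' :: nat)"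
proof -
  assume "b < d" "b' < d"
  then have "(a * d + b) div d = a" "(a * d + b) mod d = b" "(a' * d + b') div d = a'" "(a' * d + b') mod d = b'"
    by auto
  then show ?thesis by metis
qed

lemma lessThan_multE:
  assumes "z < dL * (dR :: nat)"
  obtains a b where "a < dL" "b < dR" "z = a * dR + b"
proof
  have "0 < dR" using assms by (cases dR) auto
  then show "z div dR < dL" "z mod dR < dR" using assms by (auto simp: less_mult_imp_div_less)
qed simp

lemma sum_if_zero: "(\<Sum>x\<in>A. if P then f x else 0) = (if P then sum f A else 0)"
  by simp

lemma sum_lessThan_mult:
  "(\<Sum>x<(dL :: nat) * dR. f x) = (\<Sum>a<dL. \<Sum>b<dR. f (a * dR + b) :: 'a :: comm_monoid_add)"
proof (induction dL)
  case (Suc dL)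
  have "(\<Sum>x<Suc dL * dR. f x) = (\<Sum>x<dL * dR + dR. f x)"
    by (simp add: add.commute)
  also have "\<dots> = (\<Sum>a<Suc dL. \<Sum>b<dR. f (a * dR + b))"
    by (simp only: sum_lessThan_add Suc sum.lessThan_Suc)
  finally show ?case .
qed simp

definition square_blocks :: "'a mat list \<Rightarrow> nat list \<Rightarrow> bool" where
  "square_blocks Ms ds \<longleftrightarrow> length Ms = length ds \<and> (\<forall>i<length ds. Ms ! i \<in> carrier_mat (ds ! i) (ds ! i))"

lemma square_blocks_Cons: "square_blocks (M # Ms) (d # ds) \<longleftrightarrow> M \<in> carrier_mat d d \<and> square_blocks Ms ds"
  unfolding square_blocks_def by (auto simp: nth_Cons split: nat.splits)

lemma diag_block_mat_carrier_blocks: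
  "square_blocks Ms ds \<Longrightarrow> diag_block_mat Ms \<in> carrier_mat (sum_list ds) (sum_list ds)"
proof -
  assume "square_blocks Ms ds"
  then have "map dim_row Ms = ds" "map dim_col Ms = ds"
    unfolding square_blocks_def by (auto intro!: nth_equalityI)
  then show ?thesis unfolding carrier_mat_def by (simp add: dim_diag_block_mat)
qed

lemma index_diag_block_mat_blocks:
  "square_blocks Ms ds \<Longrightarrow> i < length ds \<Longrightarrow> j < length ds \<Longrightarrow> a < ds ! i \<Longrightarrow> b < ds ! j \<Longrightarrow>
   diag_block_mat Ms $$ (block_start ds i + a, block_start ds j + b) = (if i = j then Ms ! i $$ (a, b) else 0)"
proof (induction Ms arbitrary: ds i j)
  case Nil then show ?case by (simp add: square_blocks_def)
next
  case (Cons M Ms)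
  obtain d ds' where ds: "ds = d # ds'" using Cons.prems(1) unfolding square_blocks_def by (cases ds) auto
  have M: "M \<in> carrier_mat d d" and blocks: "square_blocks Ms ds'"
    using Cons.prems(1) ds square_blocks_Cons by auto
  have "diag_block_mat Ms \<in> carrier_mat (sum_list ds') (sum_list ds')"
    using diag_block_mat_carrier_blocks[OF blocks] .
  then show ?case using Cons.IH[OF blocks] Cons.prems M unfolding ds
    by (cases i; cases j) (auto simp: Let_def block_start_add_less)
qed

lemma mat_eq_blocksI:
  assumes P: "P \<in> carrier_mat (sum_list ds) (sum_list ds)" and Q: "Q \<in> carrier_mat (sum_list ds) (sum_list ds)"
    and blocks_eq: "\<And>i j a b. i < length ds \<Longrightarrow> j < length ds \<Longrightarrow> a < ds ! i \<Longrightarrow> b < ds ! j \<Longrightarrow>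
      P $$ (block_start ds i + a, block_start ds j + b) = Q $$ (block_start ds i + a, block_start ds j + b)"
  shows "P = Q"
proof (rule eq_matI)
  fix x y assume "x < dim_row Q" "y < dim_col Q"
  with Q obtain i a j b where "i < length ds" "a < ds ! i" "x = block_start ds i + a"
    and "j < length ds" "b < ds ! j" "y = block_start ds j + b"
    by (auto elim!: lessThan_sum_listE)
  then show "P $$ (x, y) = Q $$ (x, y)" using blocks_eq by simp
qed (use P Q in auto)

lemma block_alg_iff: "X \<in> block_alg ds \<longleftrightarrow> (\<exists>Ms. square_blocks Ms ds \<and> X = diag_block_mat Ms)"
  unfolding block_alg_def square_blocks_def by auto

lemma block_alg_carrier: "X \<in> block_alg ds \<Longrightarrow> X \<in> carrier_mat (sum_list ds) (sum_list ds)"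
  by (auto simp: block_alg_iff diag_block_mat_carrier_blocks)

lemma zero_mem_block_alg: "0\<^sub>m (sum_list ds) (sum_list ds) \<in> block_alg ds"
proof -
  have blocks: "square_blocks (map (\<lambda>d. 0\<^sub>m d d) ds) ds"
    unfolding square_blocks_def by auto
  have "diag_block_mat (map (\<lambda>d. 0\<^sub>m d d) ds) = 0\<^sub>m (sum_list ds) (sum_list ds)"
    by (rule mat_eq_blocksI[OF diag_block_mat_carrier_blocks[OF blocks]])
      (auto simp: index_diag_block_mat_blocks[OF blocks] block_start_add_less)
  then show ?thesis using blocks unfolding block_alg_iff by metis
qed

abbreviation left_dims :: "(nat \<times> nat) list \<Rightarrow> nat list" where
  "left_dims ds \<equiv> map fst ds"

abbreviation block_dims :: "(nat \<times> nat) list \<Rightarrow> nat list" where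
  "block_dims ds \<equiv> map (\<lambda>(dL, dR). dL * dR) ds"

text \<open>Positions of the basis vector a of \<open>H_L^i\<close> in \<open>\<Oplus>\<^sub>i H_L^i\<close> and of the basis vector
  a \<otimes> b of \<open>H_L^i \<otimes> H_R^i\<close> in \<open>\<Oplus>\<^sub>i H_L^i \<otimes> H_R^i\<close>, following the index convention of kron.\<close>
abbreviation left_index :: "(nat \<times> nat) list \<Rightarrow> nat \<Rightarrow> nat \<Rightarrow> nat" where
  "left_index ds i a \<equiv> block_start (left_dims ds) i + a"

abbreviation tensor_index :: "(nat \<times> nat) list \<Rightarrow> nat \<Rightarrow> nat \<Rightarrow> nat \<Rightarrow> nat" where
  "tensor_index ds i a b \<equiv> block_start (block_dims ds) i + (a * snd (ds ! i) + b)"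

lemma case_prod_mult [simp]: "(case p of (x, y) \<Rightarrow> x * y) = fst p * (snd p :: nat)"
  by (cases p) simp

lemma tensor_index_less:
  "i < length ds \<Longrightarrow> a < fst (ds ! i) \<Longrightarrow> b < snd (ds ! i) \<Longrightarrow> tensor_index ds i a b < sum_list (block_dims ds)"
  using block_start_add_less[of i "block_dims ds"] mult_add_less by simp

lemma tensor_index_eq_iff:
  assumes "i < length ds" "a < fst (ds ! i)" "b < snd (ds ! i)"
    and "j < length ds" "a' < fst (ds ! j)" "b' < snd (ds ! j)"
  shows "tensor_index ds i a b = tensor_index ds j a' b' \<longleftrightarrow> i = j \<and> a = a' \<and> b = b'"
  using assms block_start_add_eq_iff[of i "block_dims ds" j] mult_add_less mult_add_eq_iff by auto

lemma mat_eq_tensor_blocksI: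
  assumes P: "P \<in> carrier_mat (sum_list (block_dims ds)) (sum_list (block_dims ds))"
    and Q: "Q \<in> carrier_mat (sum_list (block_dims ds)) (sum_list (block_dims ds))"
    and blocks_eq: "\<And>i j a a' b b'. i < length ds \<Longrightarrow> j < length ds \<Longrightarrow> a < fst (ds ! i) \<Longrightarrow> b < snd (ds ! i) \<Longrightarrow>
      a' < fst (ds ! j) \<Longrightarrow> b' < snd (ds ! j) \<Longrightarrow>
      P $$ (tensor_index ds i a b, tensor_index ds j a' b') = Q $$ (tensor_index ds i a b, tensor_index ds j a' b')"
  shows "P = Q"
proof (rule mat_eq_blocksI[OF P Q])
  fix i j z z' assume ij: "i < length (block_dims ds)" "j < length (block_dims ds)"
    "z < block_dims ds ! i" "z' < block_dims ds ! j"
  then obtain a b a' b' where "a < fst (ds ! i)" "b < snd (ds ! i)" "z = a * snd (ds ! i) + b"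
    and "a' < fst (ds ! j)" "b' < snd (ds ! j)" "z' = a' * snd (ds ! j) + b'"
    by (auto elim!: lessThan_multE)
  then show "P $$ (block_start (block_dims ds) i + z, block_start (block_dims ds) j + z') =
    Q $$ (block_start (block_dims ds) i + z, block_start (block_dims ds) j + z')"
    using blocks_eq ij by simp
qed

lemma sum_lessThan_block_dims:
  "(\<Sum>x<sum_list (block_dims ds). f x) =
   (\<Sum>i<length ds. \<Sum>a<fst (ds ! i). \<Sum>b<snd (ds ! i). f (tensor_index ds i a b) :: 'a :: comm_monoid_add)"
  by (simp add: sum_lessThan_sum_list[of f "block_dims ds"] sum_lessThan_mult)

lemma sum_lessThan_left_dims:
  "(\<Sum>p<sum_list (left_dims ds). f p) = (\<Sum>i<length ds. \<Sum>a<fst (ds ! i). f (left_index ds i a) :: 'a :: comm_monoid_add)"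
  by (simp add: sum_lessThan_sum_list[of f "left_dims ds"])

definition diag_kron_id :: "(nat \<times> nat) list \<Rightarrow> complex mat list \<Rightarrow> complex mat" where
  "diag_kron_id ds Ls = diag_block_mat (map (\<lambda>i. kron (Ls ! i) (1\<^sub>m (snd (ds ! i)))) [0..<length ds])"

lemma kron_one_carrier: "L \<in> carrier_mat dL dL \<Longrightarrow> kron L (1\<^sub>m dR) \<in> carrier_mat (dL * dR) (dL * dR)"
  unfolding kron_def carrier_mat_def by simp

lemma index_kron_one:
  "L \<in> carrier_mat dL dL \<Longrightarrow> a < dL \<Longrightarrow> a' < dL \<Longrightarrow> b < dR \<Longrightarrow> b' < dR \<Longrightarrow>
   kron L (1\<^sub>m dR) $$ (a * dR + b, a' * dR + b') = (if b = b' then L $$ (a, a') else 0)"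
  using mult_add_less[of a dL b dR] mult_add_less[of a' dL b' dR] unfolding kron_def by simp

lemma square_blocks_kron_one:
  "square_blocks Ls (left_dims ds) \<Longrightarrow>
   square_blocks (map (\<lambda>i. kron (Ls ! i) (1\<^sub>m (snd (ds ! i)))) [0..<length ds]) (block_dims ds)"
  unfolding square_blocks_def by (auto intro!: kron_one_carrier)

lemma diag_kron_id_carrier:
  "square_blocks Ls (left_dims ds) \<Longrightarrow>
   diag_kron_id ds Ls \<in> carrier_mat (sum_list (block_dims ds)) (sum_list (block_dims ds))"
  unfolding diag_kron_id_def by (rule diag_block_mat_carrier_blocks[OF square_blocks_kron_one])

lemma index_diag_kron_id:
  assumes blocks: "square_blocks Ls (left_dims ds)"
    and "i < length ds" "a < fst (ds ! i)" "b < snd (ds ! i)"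
    and "j < length ds" "a' < fst (ds ! j)" "b' < snd (ds ! j)"
  shows "diag_kron_id ds Ls $$ (tensor_index ds i a b, tensor_index ds j a' b') =
    (if i = j then if b = b' then Ls ! i $$ (a, a') else 0 else 0)"
  using assms index_diag_block_mat_blocks[OF square_blocks_kron_one[OF blocks], of i j]
    index_kron_one[of "Ls ! i" "fst (ds ! i)"] mult_add_less
  unfolding diag_kron_id_def square_blocks_def by auto

definition ptrace_entry :: "(nat \<times> nat) list \<Rightarrow> complex mat \<Rightarrow> nat \<Rightarrow> nat \<Rightarrow> nat \<Rightarrow> complex" where
  "ptrace_entry ds M i a a' = (\<Sum>b<snd (ds ! i). M $$ (tensor_index ds i a b, tensor_index ds i a' b))"

lemma mtrace_diag_kron_id_mult:
  assumes blocks: "square_blocks Ls (left_dims ds)"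
    and M: "M \<in> carrier_mat (sum_list (block_dims ds)) (sum_list (block_dims ds))"
  shows "mtrace (diag_kron_id ds Ls * M) =
    (\<Sum>i<length ds. \<Sum>a<fst (ds ! i). \<Sum>a'<fst (ds ! i). Ls ! i $$ (a, a') * ptrace_entry ds M i a' a)"
proof -
  have "mtrace (diag_kron_id ds Ls * M) =
    (\<Sum>i<length ds. \<Sum>a<fst (ds ! i). \<Sum>b<snd (ds ! i). \<Sum>j<length ds. \<Sum>a'<fst (ds ! j). \<Sum>b'<snd (ds ! j).
       diag_kron_id ds Ls $$ (tensor_index ds i a b, tensor_index ds j a' b') *
       M $$ (tensor_index ds j a' b', tensor_index ds i a b))"
    by (simp add: mtrace_mult[OF diag_kron_id_carrier[OF blocks] M] sum_lessThan_block_dims)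
  also have "\<dots> = (\<Sum>i<length ds. \<Sum>a<fst (ds ! i). \<Sum>b<snd (ds ! i). \<Sum>a'<fst (ds ! i).
       Ls ! i $$ (a, a') * M $$ (tensor_index ds i a' b, tensor_index ds i a b))"
    by (simp add: index_diag_kron_id[OF blocks] if_distrib[of "\<lambda>x. x * _"] sum_if_zero sum.delta' cong: if_cong)
  also have "\<dots> = (\<Sum>i<length ds. \<Sum>a<fst (ds ! i). \<Sum>a'<fst (ds ! i). Ls ! i $$ (a, a') * ptrace_entry ds M i a' a)"
    unfolding ptrace_entry_def by (simp add: sum_distrib_left sum.swap[of _ "{..<snd _}"])
  finally show ?thesis .
qed

lemma block_offset_eq_block_start: "block_offset ds i = block_start (block_dims ds) i"
  unfolding block_offset_def block_start_def by (simp add: take_map)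

lemma square_blocks_ptrace:
  "square_blocks (map (\<lambda>i. let (dL, dR) = ds ! i in
      ptrace_R dL dR (diag_block (block_offset ds i) (dL * dR) X)) [0..<length ds]) (left_dims ds)"
  unfolding square_blocks_def ptrace_R_def by (auto simp: split_beta Let_def)

lemma partial_trace_vN_carrier:
  "partial_trace_vN V ds X \<in> carrier_mat (sum_list (left_dims ds)) (sum_list (left_dims ds))"
  unfolding partial_trace_vN_def by (rule diag_block_mat_carrier_blocks[OF square_blocks_ptrace])

lemma partial_trace_vN_dim [simp]:
  "dim_row (partial_trace_vN V ds X) = sum_list (left_dims ds)"
  "dim_col (partial_trace_vN V ds X) = sum_list (left_dims ds)"
  using partial_trace_vN_carrier by auto

lemma partial_trace_vN_mem_block_alg: "partial_trace_vN V ds X \<in> block_alg (left_dims ds)"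
  unfolding block_alg_iff partial_trace_vN_def using square_blocks_ptrace by blast

lemma index_partial_trace_vN:
  assumes "i < length ds" "a < fst (ds ! i)" "j < length ds" "a' < fst (ds ! j)"
  shows "partial_trace_vN V ds X $$ (left_index ds i a, left_index ds j a') =
    (if i = j then ptrace_entry ds (V * X * mat_adjoint V) i a a' else 0)"
  using assms index_diag_block_mat_blocks[OF square_blocks_ptrace, where i=i and j=j and a=a and b=a']
  by (auto simp: partial_trace_vN_def split_beta Let_def ptrace_R_def diag_block_def ptrace_entry_def
      block_offset_eq_block_start mult_add_less intro!: sum.cong)

lemma partial_trace_vN_eq_0_iff_entries:
  "partial_trace_vN V ds X = 0\<^sub>m (sum_list (left_dims ds)) (sum_list (left_dims ds)) \<longleftrightarrow>
   (\<forall>i<length ds. \<forall>a<fst (ds ! i). \<forall>a'<fst (ds ! i). ptrace_entry ds (V * X * mat_adjoint V) i a a' = 0)"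
proof
  assume zero: "partial_trace_vN V ds X = 0\<^sub>m (sum_list (left_dims ds)) (sum_list (left_dims ds))"
  show "\<forall>i<length ds. \<forall>a<fst (ds ! i). \<forall>a'<fst (ds ! i). ptrace_entry ds (V * X * mat_adjoint V) i a a' = 0"
  proof (intro allI impI)
    fix i a a' assume "i < length ds" "a < fst (ds ! i)" "a' < fst (ds ! i)"
    then show "ptrace_entry ds (V * X * mat_adjoint V) i a a' = 0"
      using arg_cong[OF zero, of "\<lambda>P. P $$ (left_index ds i a, left_index ds i a')"]
      by (simp add: index_partial_trace_vN block_start_add_less)
  qed
qed (auto intro!: mat_eq_blocksI[OF partial_trace_vN_carrier] simp: index_partial_trace_vN block_start_add_less)

lemma partial_trace_vN_diff:
  assumes V: "V \<in> carrier_mat N N" and X: "X \<in> carrier_mat N N" and Y: "Y \<in> carrier_mat N N"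
    and N: "sum_list (block_dims ds) = N"
  shows "partial_trace_vN V ds (X - Y) = partial_trace_vN V ds X - partial_trace_vN V ds Y"
proof (rule mat_eq_blocksI[OF partial_trace_vN_carrier])
  have diff: "V * (X - Y) * mat_adjoint V = V * X * mat_adjoint V - V * Y * mat_adjoint V"
    using V X Y by (rule conj_diff_mat)
  fix i j a a' assume ij: "i < length (left_dims ds)" "j < length (left_dims ds)"
    "a < left_dims ds ! i" "a' < left_dims ds ! j"
  have "ptrace_entry ds (V * (X - Y) * mat_adjoint V) i a a' =
    ptrace_entry ds (V * X * mat_adjoint V) i a a' - ptrace_entry ds (V * Y * mat_adjoint V) i a a'"
    if "i = j"
    using ij that V X Y N tensor_index_less[of i ds]
    unfolding diff ptrace_entry_def by (simp add: sum_subtractf)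
  then show "partial_trace_vN V ds (X - Y) $$ (left_index ds i a, left_index ds j a') =
    (partial_trace_vN V ds X - partial_trace_vN V ds Y) $$ (left_index ds i a, left_index ds j a')"
    using ij by (simp add: index_partial_trace_vN block_start_add_less)
qed (intro minus_carrier_mat partial_trace_vN_carrier)

lemma mtrace_partial_trace_vN:
  assumes "V * X * mat_adjoint V \<in> carrier_mat (sum_list (block_dims ds)) (sum_list (block_dims ds))"
  shows "mtrace (partial_trace_vN V ds X) = mtrace (V * X * mat_adjoint V)"
proof -
  have "mtrace (partial_trace_vN V ds X) = (\<Sum>i<length ds. \<Sum>a<fst (ds ! i). ptrace_entry ds (V * X * mat_adjoint V) i a a)"
    unfolding mtrace_def using partial_trace_vN_carrier[of V ds X]
    by (simp add: sum_lessThan_left_dims index_partial_trace_vN)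
  also have "\<dots> = (\<Sum>x<sum_list (block_dims ds). (V * X * mat_adjoint V) $$ (x, x))"
    by (simp add: sum_lessThan_block_dims ptrace_entry_def)
  also have "\<dots> = mtrace (V * X * mat_adjoint V)"
    using carrier_matD(1)[OF assms] unfolding mtrace_def by simp
  finally show ?thesis .
qed

lemma vN_decompositionD:
  assumes "vN_decomposition N C V ds"
  shows "V \<in> carrier_mat N N" "mat_adjoint V * V = 1\<^sub>m N" "V * mat_adjoint V = 1\<^sub>m N"
    "sum_list (block_dims ds) = N" "\<And>i. i < length ds \<Longrightarrow> 0 < snd (ds ! i)"
  using assms unfolding vN_decomposition_def unitary_mat_def by (auto simp: split_beta dest!: nth_mem)

lemma vN_decomposition_conj_commutant:
  "vN_decomposition N C V ds \<Longrightarrow>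
   (\<lambda>X. V * X * mat_adjoint V) ` commutant N C = {diag_kron_id ds Ls | Ls. square_blocks Ls (left_dims ds)}"
  unfolding vN_decomposition_def square_blocks_def diag_kron_id_def by auto

lemma cnj_mult_self_nonneg: "0 \<le> cnj (z :: complex) * z"
  using conjugate_square_positive[of z] by (simp add: mult.commute)

lemma partial_trace_vN_eq_0_iff:
  assumes dec: "vN_decomposition N C V ds" and X: "X \<in> carrier_mat N N"
  shows "partial_trace_vN V ds X = 0\<^sub>m (sum_list (left_dims ds)) (sum_list (left_dims ds)) \<longleftrightarrow>
    (\<forall>D\<in>commutant N C. mtrace (D * X) = 0)"
proof -
  note V = vN_decompositionD[OF dec]
  define M where "M = V * X * mat_adjoint V"
  have M: "M \<in> carrier_mat (sum_list (block_dims ds)) (sum_list (block_dims ds))"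
    unfolding M_def using V X by simp
  have mtrace_eq: "mtrace (D * X) = mtrace (diag_kron_id ds Ls * M)"
    if "V * D * mat_adjoint V = diag_kron_id ds Ls" "D \<in> commutant N C" for D Ls
    using that mtrace_mult_unitary_conj[OF V(1,2) commutant_carrier[OF that(2)] X] unfolding M_def by simp
  show ?thesis
    unfolding partial_trace_vN_eq_0_iff_entries M_def[symmetric]
  proof safe
    fix D assume entries: "\<forall>i<length ds. \<forall>a<fst (ds ! i). \<forall>a'<fst (ds ! i). ptrace_entry ds M i a a' = 0"
      and D: "D \<in> commutant N C"
    obtain Ls where "square_blocks Ls (left_dims ds)" "V * D * mat_adjoint V = diag_kron_id ds Ls"
      using vN_decomposition_conj_commutant[OF dec] D by blast
    then show "mtrace (D * X) = 0"
      using mtrace_eq D entries by (simp add: mtrace_diag_kron_id_mult M)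
  next
    fix i a a' assume traces: "\<forall>D\<in>commutant N C. mtrace (D * X) = 0"
      and i: "i < length ds" "a < fst (ds ! i)" "a' < fst (ds ! i)"
    \<comment> \<open>Test against the element of the commutant built from the conjugated entries,
       so that the trace becomes a sum of squared moduli.\<close>
    define Ls where "Ls = map (\<lambda>i. mat (fst (ds ! i)) (fst (ds ! i)) (\<lambda>(a, a'). cnj (ptrace_entry ds M i a' a))) [0..<length ds]"
    have blocks: "square_blocks Ls (left_dims ds)"
      unfolding Ls_def square_blocks_def by auto
    then have "diag_kron_id ds Ls \<in> (\<lambda>X. V * X * mat_adjoint V) ` commutant N C"
      by (subst vN_decomposition_conj_commutant[OF dec]) blast
    then obtain D where D: "D \<in> commutant N C" "V * D * mat_adjoint V = diag_kron_id ds Ls"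
      by (elim imageE) simp
    then have "mtrace (diag_kron_id ds Ls * M) = 0"
      using traces mtrace_eq[OF D(2,1)] by simp
    then have "(\<Sum>i<length ds. \<Sum>a<fst (ds ! i). \<Sum>a'<fst (ds ! i).
        cnj (ptrace_entry ds M i a' a) * ptrace_entry ds M i a' a) = 0"
      unfolding mtrace_diag_kron_id_mult[OF blocks M] by (simp add: Ls_def)
    then have "\<forall>i<length ds. \<forall>a<fst (ds ! i). \<forall>a'<fst (ds ! i). cnj (ptrace_entry ds M i a' a) * ptrace_entry ds M i a' a = 0"
      by (simp add: sum_nonneg_eq_0_iff sum_nonneg cnj_mult_self_nonneg)
    then show "ptrace_entry ds M i a a' = 0" using i by simp
  qed
qed

definition kraus :: "'j set \<Rightarrow> nat \<Rightarrow> nat \<Rightarrow> ('j \<Rightarrow> nat \<Rightarrow> nat \<Rightarrow> complex) \<Rightarrow> complex mat \<Rightarrow> complex mat" where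
  "kraus J D' D K Y = mat D' D' (\<lambda>(p, q). \<Sum>j\<in>J. \<Sum>a<D. \<Sum>b<D. K j p a * Y $$ (a, b) * cnj (K j q b))"

lemma kraus_carrier [simp]: "kraus J D' D K Y \<in> carrier_mat D' D'"
  unfolding kraus_def by simp

lemma kraus_dim [simp]: "dim_row (kraus J D' D K Y) = D'" "dim_col (kraus J D' D K Y) = D'"
  unfolding kraus_def by simp_all

lemma psd_kraus:
  assumes J: "finite J" and X: "X \<in> carrier_mat N N" and psd: "psd X"
  shows "psd (kraus J N' N K X)"
proof -
  have "Im (conjugate v \<bullet> (kraus J N' N K X *\<^sub>v v)) = 0 \<and> 0 \<le> Re (conjugate v \<bullet> (kraus J N' N K X *\<^sub>v v))"
    if v: "v \<in> carrier_vec N'" for v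
  proof -
    define w where "w j = vec N (\<lambda>x. \<Sum>q<N'. cnj (K j q x) * v $ q)" for j
    have w: "w j \<in> carrier_vec N" for j unfolding w_def by simp
    \<comment> \<open>Pulling all sums over indices below N' outwards brings both sides to the same quadruple sum.\<close>
    note swap = sum.swap[where A = "{0..<N}" and B = "{0..<N'}"]
    have "conjugate v \<bullet> (kraus J N' N K X *\<^sub>v v) = (\<Sum>j\<in>J. conjugate (w j) \<bullet> (X *\<^sub>v w j))"
      using v X w
      by (simp add: kraus_def scalar_prod_def lessThan_atLeast0 mult_mat_vec_def w_def cnj_sum
          sum_distrib_left sum_distrib_right swap sum.swap[of _ J] mult_ac)
        (rule sum.cong[OF refl], rule sum.swap)
    moreover have "Im (conjugate (w j) \<bullet> (X *\<^sub>v w j)) = 0 \<and> 0 \<le> Re (conjugate (w j) \<bullet> (X *\<^sub>v w j))" for j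
      using psd X w unfolding psd_def Let_def by auto
    ultimately show ?thesis by (simp add: sum_nonneg)
  qed
  then show ?thesis unfolding psd_def Let_def by simp
qed

lemma ampliate_kraus:
  "ampliate k D D' (kraus J D' D K) X =
   kraus J (k * D') (k * D) (\<lambda>j p x. if p div D' = x div D then K j (p mod D') (x mod D) else 0) X"
proof (rule eq_matI)
  fix p q assume "p < dim_row (kraus J (k * D') (k * D) (\<lambda>j p x. if p div D' = x div D then K j (p mod D') (x mod D) else 0) X)"
    "q < dim_col (kraus J (k * D') (k * D) (\<lambda>j p x. if p div D' = x div D then K j (p mod D') (x mod D) else 0) X)"
  then have pq: "p < k * D'" "q < k * D'" by auto
  then have "0 < D'" by (cases D') auto
  then have "p div D' < k" "q div D' < k" using pq by (simp_all add: less_mult_imp_div_less)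
  then show "ampliate k D D' (kraus J D' D K) X $$ (p, q) =
    kraus J (k * D') (k * D) (\<lambda>j p x. if p div D' = x div D then K j (p mod D') (x mod D) else 0) X $$ (p, q)"
    using pq \<open>0 < D'\<close>
    by (simp add: kraus_def ampliate_def sub_block_def sum_lessThan_mult if_distrib[of "\<lambda>x. x * _"]
        if_distrib[of "\<lambda>x. _ * x"] if_distrib[of cnj] sum_if_zero sum.delta' cong: if_cong)
qed (simp_all add: ampliate_def)

lemma ampliate_carrier: "ampliate k D D' F X \<in> carrier_mat (k * D') (k * D')"
  unfolding ampliate_def by simp

lemma psd_ampliate_kraus:
  "finite J \<Longrightarrow> X \<in> carrier_mat (k * D) (k * D) \<Longrightarrow> psd X \<Longrightarrow> psd (ampliate k D D' (kraus J D' D K) X)"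
  unfolding ampliate_kraus by (rule psd_kraus)

lemma kraus_linear:
  assumes "X \<in> carrier_mat D D" "Y \<in> carrier_mat D D"
  shows "kraus J D' D K (c \<cdot>\<^sub>m X + a \<cdot>\<^sub>m Y) = c \<cdot>\<^sub>m kraus J D' D K X + a \<cdot>\<^sub>m kraus J D' D K Y"
  using assms
  by (intro eq_matI) (auto simp: kraus_def algebra_simps sum.distrib sum_distrib_left)

lemma conj_eq_kraus:
  assumes G: "G \<in> carrier_mat D' D" and Y: "Y \<in> carrier_mat D D"
  shows "G * Y * mat_adjoint G = kraus (UNIV :: unit set) D' D (\<lambda>_ p a. G $$ (p, a)) Y"
  using assms
  by (intro eq_matI) (auto simp: kraus_def index_mult_mat_sum sum_distrib_right intro: sum.swap)

lemma sub_block_ampliate: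
  assumes "P < k" "Q < k" and F: "\<And>Y. Y \<in> carrier_mat Da Da \<Longrightarrow> F Y \<in> carrier_mat Db Db"
  shows "sub_block Db P Q (ampliate k Da Db F X) = F (sub_block Da P Q X)"
proof -
  have "F (sub_block Da P Q X) \<in> carrier_mat Db Db" by (rule F) (simp add: sub_block_def)
  then have "dim_row (F (sub_block Da P Q X)) = Db" "dim_col (F (sub_block Da P Q X)) = Db" by auto
  then show ?thesis
    using assms mult_add_less[of P k _ Db] mult_add_less[of Q k _ Db]
    by (intro eq_matI) (auto simp: sub_block_def ampliate_def)
qed

lemma ampliate_comp:
  assumes "\<And>Y. Y \<in> carrier_mat Da Da \<Longrightarrow> F Y \<in> carrier_mat Db Db"
  shows "ampliate k Db Dc G (ampliate k Da Db F X) = ampliate k Da Dc (\<lambda>Y. G (F Y)) X"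
proof (rule eq_matI)
  fix p q assume "p < dim_row (ampliate k Da Dc (\<lambda>Y. G (F Y)) X)" "q < dim_col (ampliate k Da Dc (\<lambda>Y. G (F Y)) X)"
  then have pq: "p < k * Dc" "q < k * Dc" by (auto simp: ampliate_def)
  then have "0 < Dc" by (cases Dc) auto
  then have "p div Dc < k" "q div Dc < k" using pq by (auto simp: less_mult_imp_div_less)
  then show "ampliate k Db Dc G (ampliate k Da Db F X) $$ (p, q) = ampliate k Da Dc (\<lambda>Y. G (F Y)) X $$ (p, q)"
    using pq unfolding ampliate_def[of k Db Dc G] ampliate_def[of k Da Dc]
    by (simp add: sub_block_ampliate[OF _ _ assms])
qed (auto simp: ampliate_def)

definition ptrace_lift :: "(nat \<times> nat) list \<Rightarrow> complex mat \<Rightarrow> complex mat" where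
  "ptrace_lift ds Y = diag_kron_id ds (map (\<lambda>i. (1 / of_nat (snd (ds ! i))) \<cdot>\<^sub>m
     diag_block (block_start (left_dims ds) i) (fst (ds ! i)) Y) [0..<length ds])"

lemma square_blocks_ptrace_lift:
  "square_blocks (map (\<lambda>i. (1 / of_nat (snd (ds ! i))) \<cdot>\<^sub>m
     diag_block (block_start (left_dims ds) i) (fst (ds ! i)) Y) [0..<length ds]) (left_dims ds)"
  unfolding square_blocks_def diag_block_def by auto

lemma ptrace_lift_carrier:
  "ptrace_lift ds Y \<in> carrier_mat (sum_list (block_dims ds)) (sum_list (block_dims ds))"
  unfolding ptrace_lift_def by (rule diag_kron_id_carrier[OF square_blocks_ptrace_lift])

lemma index_ptrace_lift:
  assumes "i < length ds" "a < fst (ds ! i)" "b < snd (ds ! i)"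
    and "j < length ds" "a' < fst (ds ! j)" "b' < snd (ds ! j)"
  shows "ptrace_lift ds Y $$ (tensor_index ds i a b, tensor_index ds j a' b') =
    (if i = j then if b = b' then Y $$ (left_index ds i a, left_index ds i a') / of_nat (snd (ds ! i)) else 0 else 0)"
  using index_diag_kron_id[OF square_blocks_ptrace_lift assms] assms unfolding ptrace_lift_def
  by (auto simp: diag_block_def)

lemma ptrace_entry_ptrace_lift:
  assumes "i < length ds" "a < fst (ds ! i)" "a' < fst (ds ! i)" "0 < snd (ds ! i)"
  shows "ptrace_entry ds (ptrace_lift ds Y) i a a' = Y $$ (left_index ds i a, left_index ds i a')"
  using assms unfolding ptrace_entry_def by (simp add: index_ptrace_lift)

lemma mtrace_ptrace_lift:
  assumes pos: "\<And>i. i < length ds \<Longrightarrow> 0 < snd (ds ! i)"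
    and Y: "Y \<in> carrier_mat (sum_list (left_dims ds)) (sum_list (left_dims ds))"
  shows "mtrace (ptrace_lift ds Y) = mtrace Y"
  using Y ptrace_lift_carrier[of ds Y] unfolding mtrace_def
  by (simp add: sum_lessThan_block_dims sum_lessThan_left_dims index_ptrace_lift pos)

lemma partial_trace_vN_ptrace_lift:
  assumes V: "V \<in> carrier_mat N N" "V * mat_adjoint V = 1\<^sub>m N" and N: "sum_list (block_dims ds) = N"
    and pos: "\<And>i. i < length ds \<Longrightarrow> 0 < snd (ds ! i)" and Y: "Y \<in> block_alg (left_dims ds)"
  shows "partial_trace_vN V ds (mat_adjoint V * ptrace_lift ds Y * V) = Y"
proof -
  obtain Ms where Ms: "square_blocks Ms (left_dims ds)" "Y = diag_block_mat Ms"
    using Y unfolding block_alg_iff by blast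
  have "V * (mat_adjoint V * ptrace_lift ds Y * V) * mat_adjoint V = ptrace_lift ds Y"
    using V N ptrace_lift_carrier[of ds Y] unitary_cancel_left[of "mat_adjoint V" N]
    by (simp add: assoc_mult_mat[of _ N N _ N _ N])
  then show ?thesis
    using Ms pos
    by (intro mat_eq_blocksI[OF partial_trace_vN_carrier block_alg_carrier[OF Y]])
      (auto simp: index_partial_trace_vN ptrace_entry_ptrace_lift index_diag_block_mat_blocks)
qed

definition kraus_indices :: "(nat \<times> nat) list \<Rightarrow> (nat \<times> nat) set" where
  "kraus_indices ds = Sigma {..<length ds} (\<lambda>i. {..<snd (ds ! i)})"

lemma finite_kraus_indices [simp]: "finite (kraus_indices ds)"
  unfolding kraus_indices_def by auto

lemma sum_kraus_indices: "(\<Sum>ib\<in>kraus_indices ds. f ib) = (\<Sum>i<length ds. \<Sum>b<snd (ds ! i). f (i, b))"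
  unfolding kraus_indices_def by (simp add: sum.Sigma)

text \<open>The Kraus operator of index (i, b) maps the basis vector a \<otimes> b of the i-th block to the
  basis vector a of the i-th block of the reduced space.\<close>
definition ptrace_kraus :: "(nat \<times> nat) list \<Rightarrow> nat \<times> nat \<Rightarrow> nat \<Rightarrow> nat \<Rightarrow> complex" where
  "ptrace_kraus ds ib p x =
    (if \<exists>a<fst (ds ! fst ib). p = left_index ds (fst ib) a \<and> x = tensor_index ds (fst ib) a (snd ib) then 1 else 0)"

lemma index_ptrace_kraus:
  assumes "i0 < length ds" "b0 < snd (ds ! i0)" "i < length ds" "a < fst (ds ! i)"
    and "i1 < length ds" "a1 < fst (ds ! i1)" "b1 < snd (ds ! i1)"
  shows "ptrace_kraus ds (i0, b0) (left_index ds i a) (tensor_index ds i1 a1 b1) =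
    (if i0 = i \<and> i1 = i \<and> a1 = a \<and> b1 = b0 then 1 else 0)"
  using assms block_start_add_eq_iff[of i "left_dims ds" i0 a] tensor_index_eq_iff[of i1 ds a1 b1 i0 _ b0]
  unfolding ptrace_kraus_def by auto

lemma partial_trace_vN_eq_kraus:
  "partial_trace_vN V ds X = kraus (kraus_indices ds) (sum_list (left_dims ds)) (sum_list (block_dims ds))
     (ptrace_kraus ds) (V * X * mat_adjoint V)"
proof (rule mat_eq_blocksI[OF partial_trace_vN_carrier kraus_carrier])
  fix i j a a' assume "i < length (left_dims ds)" "j < length (left_dims ds)"
    "a < left_dims ds ! i" "a' < left_dims ds ! j"
  then show "partial_trace_vN V ds X $$ (left_index ds i a, left_index ds j a') =
    kraus (kraus_indices ds) (sum_list (left_dims ds)) (sum_list (block_dims ds)) (ptrace_kraus ds)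
      (V * X * mat_adjoint V) $$ (left_index ds i a, left_index ds j a')"
    by (simp add: index_partial_trace_vN ptrace_entry_def kraus_def block_start_add_less sum_kraus_indices
        sum_lessThan_block_dims index_ptrace_kraus if_conn(1) if_distrib[of "\<lambda>x. x * _"]
        if_distrib[of "\<lambda>x. _ * x"] if_distrib[of cnj] sum_if_zero sum.delta sum.delta' cong: if_cong)
qed

definition lift_scale :: "nat \<Rightarrow> complex" where
  "lift_scale d = complex_of_real (1 / sqrt (real d))"

lemma lift_scale_mult_cnj: "lift_scale d * cnj (lift_scale d) = 1 / of_nat d"
  unfolding lift_scale_def by (simp flip: of_real_mult)

definition lift_kraus :: "(nat \<times> nat) list \<Rightarrow> nat \<times> nat \<Rightarrow> nat \<Rightarrow> nat \<Rightarrow> complex" where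
  "lift_kraus ds ib x p = lift_scale (snd (ds ! fst ib)) * ptrace_kraus ds ib p x"

lemma ptrace_lift_eq_kraus:
  "ptrace_lift ds Y = kraus (kraus_indices ds) (sum_list (block_dims ds)) (sum_list (left_dims ds)) (lift_kraus ds) Y"
proof (rule mat_eq_tensor_blocksI[OF ptrace_lift_carrier kraus_carrier])
  fix i j a a' b b' assume "i < length ds" "j < length ds" "a < fst (ds ! i)" "b < snd (ds ! i)"
    "a' < fst (ds ! j)" "b' < snd (ds ! j)"
  then show "ptrace_lift ds Y $$ (tensor_index ds i a b, tensor_index ds j a' b') =
    kraus (kraus_indices ds) (sum_list (block_dims ds)) (sum_list (left_dims ds)) (lift_kraus ds) Y
      $$ (tensor_index ds i a b, tensor_index ds j a' b')"
    by (simp add: index_ptrace_lift kraus_def lift_kraus_def tensor_index_less sum_kraus_indices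
        sum_lessThan_left_dims index_ptrace_kraus if_conn(1) if_distrib[of "\<lambda>x. x * _"]
        if_distrib[of "\<lambda>x. _ * x"] if_distrib[of cnj] sum_if_zero sum.delta sum.delta' cong: if_cong)
      (auto simp: divide_inverse mult_ac lift_scale_mult_cnj[unfolded divide_inverse mult_1, symmetric])
qed

lemma heisenberg_semicausal_conj_commutant:
  assumes U: "unitary_mat n n U" and A: "A \<subseteq> carrier_mat n n" and B: "B \<subseteq> carrier_mat n n"
    and H: "heisenberg_semicausal U A B" and Ao: "Ao \<in> A"
  shows "U * Ao * mat_adjoint U \<in> commutant n B"
proof -
  note assoc = assoc_mult_mat[of _ n n _ n _ n]
  have U: "U \<in> carrier_mat n n" "U * mat_adjoint U = 1\<^sub>m n"
    using unitary_matD[OF U] by auto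
  have Aoc: "Ao \<in> carrier_mat n n" using A Ao by auto
  have "U * Ao * mat_adjoint U * Bo = Bo * (U * Ao * mat_adjoint U)" if Bo: "Bo \<in> B" for Bo
  proof -
    have Boc: "Bo \<in> carrier_mat n n" using B Bo by auto
    have "U * Ao * mat_adjoint U * Bo = U * (Ao * (mat_adjoint U * Bo * U)) * mat_adjoint U"
      using U Aoc Boc by (simp add: assoc)
    also have "\<dots> = U * ((mat_adjoint U * Bo * U) * Ao) * mat_adjoint U"
      using H Bo Ao unfolding heisenberg_semicausal_def by simp
    also have "\<dots> = Bo * (U * Ao * mat_adjoint U)"
      using U Aoc Boc unitary_cancel_left[of "mat_adjoint U" n _ n] by (simp add: assoc)
    finally show ?thesis .
  qed
  then show ?thesis unfolding commutant_def using U Aoc by auto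
qed

lemma heisenberg_semicausal_conj_bicommutant:
  assumes U: "unitary_mat n n U" and A: "A \<subseteq> carrier_mat n n" and B: "B \<subseteq> carrier_mat n n"
    and H: "heisenberg_semicausal U A B" and D: "D \<in> commutant n (commutant n B)"
  shows "mat_adjoint U * D * U \<in> commutant n A"
proof -
  note assoc = assoc_mult_mat[of _ n n _ n _ n]
  have Uc: "U \<in> carrier_mat n n" "mat_adjoint U * U = 1\<^sub>m n"
    using unitary_matD[OF U] by auto
  have Dc: "D \<in> carrier_mat n n" using D by (rule commutant_carrier)
  have "mat_adjoint U * D * U * Ao = Ao * (mat_adjoint U * D * U)" if Ao: "Ao \<in> A" for Ao
  proof -
    have Aoc: "Ao \<in> carrier_mat n n" using A Ao by auto
    have "D * (U * Ao * mat_adjoint U) = (U * Ao * mat_adjoint U) * D"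
      using D heisenberg_semicausal_conj_commutant[OF U A B H Ao] unfolding commutant_def by auto
    then have "mat_adjoint U * (D * (U * Ao * mat_adjoint U)) * U = mat_adjoint U * ((U * Ao * mat_adjoint U) * D) * U"
      by simp
    then show ?thesis
      using Uc Aoc Dc unitary_cancel_left[OF Uc, of _ n] by (simp add: assoc)
  qed
  then show ?thesis unfolding commutant_def using Uc Dc by auto
qed

lemma cptp_map_zero:
  assumes "cptp_map ds es \<Phi>"
  shows "\<Phi> (0\<^sub>m (sum_list ds) (sum_list ds)) = 0\<^sub>m (sum_list es) (sum_list es)"
proof -
  let ?Z = "0\<^sub>m (sum_list ds) (sum_list ds)"
  have carrier: "\<Phi> ?Z \<in> carrier_mat (sum_list es) (sum_list es)"
    using assms zero_mem_block_alg unfolding cptp_map_def by (blast intro: block_alg_carrier)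
  have "(0 :: complex) \<cdot>\<^sub>m ?Z + 0 \<cdot>\<^sub>m ?Z = ?Z" by (rule eq_matI) auto
  then have "\<Phi> ?Z = 0 \<cdot>\<^sub>m \<Phi> ?Z + 0 \<cdot>\<^sub>m \<Phi> ?Z"
    using assms zero_mem_block_alg unfolding cptp_map_def by metis
  also have "\<dots> = 0\<^sub>m (sum_list es) (sum_list es)"
    using carrier by (intro eq_matI) auto
  finally show ?thesis .
qed

lemma schroedinger_imp_heisenberg:
  assumes A: "A \<subseteq> carrier_mat n n" and B: "B \<subseteq> carrier_mat n n" and U: "unitary_mat n n U"
    and decA: "vN_decomposition n A VA dsA" and decB: "vN_decomposition n (commutant n B) VB dsB"
    and S: "schroedinger_semicausal n (\<lambda>\<rho>. U * \<rho> * mat_adjoint U) VA dsA VB dsB"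
  shows "heisenberg_semicausal U A B"
  unfolding heisenberg_semicausal_def
proof (intro ballI)
  fix Bo Ao assume Bo: "Bo \<in> B" and Ao: "Ao \<in> A"
  obtain E' where cp: "cptp_map (left_dims dsA) (left_dims dsB) E'"
    and E': "\<And>\<rho>. \<rho> \<in> carrier_mat n n \<Longrightarrow>
      partial_trace_vN VB dsB (U * \<rho> * mat_adjoint U) = E' (partial_trace_vN VA dsA \<rho>)"
    using S unfolding schroedinger_semicausal_def by blast
  have Uc: "U \<in> carrier_mat n n" using unitary_matD[OF U] by simp
  have Boc: "Bo \<in> carrier_mat n n" and Aoc: "Ao \<in> carrier_mat n n" using A B Ao Bo by auto
  define H where "H = mat_adjoint U * Bo * U"
  define C where "C = H * Ao - Ao * H"
  define X where "X = Ao * mat_adjoint C - mat_adjoint C * Ao"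
  have Hc: "H \<in> carrier_mat n n" and Cc: "C \<in> carrier_mat n n" and Xc: "X \<in> carrier_mat n n"
    unfolding H_def C_def X_def using Uc Boc Aoc by auto
  have "mtrace (D * X) = 0" if D: "D \<in> commutant n A" for D
  proof -
    have "D * Ao - Ao * D = 0\<^sub>m n n"
      using D Ao commutant_carrier[OF D] Aoc unfolding commutant_def by (intro eq_matI) auto
    then show ?thesis
      using mtrace_commutator[OF commutant_carrier[OF D] Aoc, of "mat_adjoint C"] Cc
      unfolding X_def by (simp add: mtrace_def)
  qed
  then have "partial_trace_vN VA dsA X = 0\<^sub>m (sum_list (left_dims dsA)) (sum_list (left_dims dsA))"
    using partial_trace_vN_eq_0_iff[OF decA Xc] by blast
  then have "partial_trace_vN VB dsB (U * X * mat_adjoint U) = 0\<^sub>m (sum_list (left_dims dsB)) (sum_list (left_dims dsB))"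
    using E'[OF Xc] cptp_map_zero[OF cp] by simp
  then have "mtrace (Bo * (U * X * mat_adjoint U)) = 0"
    using partial_trace_vN_eq_0_iff[OF decB] Uc Xc mem_bicommutant[OF B Bo] by auto
  then have "mtrace (C * mat_adjoint C) = 0"
    using mtrace_mult_conj[OF Uc Boc Xc] mtrace_commutator[OF Hc Aoc, of "mat_adjoint C"] Cc
    unfolding H_def[symmetric] X_def C_def[symmetric] by simp
  then have "C = 0\<^sub>m n n" using mtrace_mult_adjoint_eq_0[OF Cc] by simp
  then show "H * Ao = Ao * H"
    using Hc Aoc mat_minus_eq_0_iff[of "H * Ao" n n "Ao * H"] unfolding C_def by simp
qed

lemma conj_ptrace_lift_eq_kraus:
  assumes decA: "vN_decomposition N CA VA dsA" and decB: "vN_decomposition N CB VB dsB"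
    and W: "W \<in> carrier_mat N N"
  shows "partial_trace_vN VB dsB (W * ptrace_lift dsA Y * mat_adjoint W) =
    kraus (kraus_indices dsB) (sum_list (left_dims dsB)) N (ptrace_kraus dsB)
      (kraus (UNIV :: unit set) N N (\<lambda>_ p a. (VB * W) $$ (p, a))
        (kraus (kraus_indices dsA) N (sum_list (left_dims dsA)) (lift_kraus dsA) Y))"
proof -
  note VA = vN_decompositionD[OF decA] and VB = vN_decompositionD[OF decB]
  have L: "ptrace_lift dsA Y \<in> carrier_mat N N"
    using ptrace_lift_carrier[of dsA Y] VA(4) by simp
  have "partial_trace_vN VB dsB (W * ptrace_lift dsA Y * mat_adjoint W) =
    kraus (kraus_indices dsB) (sum_list (left_dims dsB)) N (ptrace_kraus dsB)
      (VB * (W * ptrace_lift dsA Y * mat_adjoint W) * mat_adjoint VB)"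
    unfolding partial_trace_vN_eq_kraus VB(4) ..
  also have "VB * (W * ptrace_lift dsA Y * mat_adjoint W) * mat_adjoint VB =
    (VB * W) * ptrace_lift dsA Y * mat_adjoint (VB * W)"
    using VB W L by (simp add: mat_adjoint_mult[of _ N N _ N] assoc_mult_mat[of _ N N _ N _ N])
  also have "\<dots> = kraus (UNIV :: unit set) N N (\<lambda>_ p a. (VB * W) $$ (p, a)) (ptrace_lift dsA Y)"
    using VB(1) W L by (intro conj_eq_kraus) simp_all
  also have "\<dots> = kraus (UNIV :: unit set) N N (\<lambda>_ p a. (VB * W) $$ (p, a))
    (kraus (kraus_indices dsA) N (sum_list (left_dims dsA)) (lift_kraus dsA) Y)"
    using ptrace_lift_eq_kraus[of dsA Y] VA(4) by simp
  finally show ?thesis .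
qed

lemma cptp_map_conj_ptrace_lift:
  assumes decA: "vN_decomposition N CA VA dsA" and decB: "vN_decomposition N CB VB dsB"
    and W: "unitary_mat N N W"
  shows "cptp_map (left_dims dsA) (left_dims dsB)
    (\<lambda>Y. partial_trace_vN VB dsB (W * ptrace_lift dsA Y * mat_adjoint W))"
proof -
  note VA = vN_decompositionD[OF decA] and VB = vN_decompositionD[OF decB]
  have W: "W \<in> carrier_mat N N" "mat_adjoint W * W = 1\<^sub>m N" using unitary_matD[OF W] by auto
  let ?sA = "sum_list (left_dims dsA)" and ?sB = "sum_list (left_dims dsB)"
  let ?\<Phi> = "\<lambda>Y. partial_trace_vN VB dsB (W * ptrace_lift dsA Y * mat_adjoint W)"
  define K1 where "K1 = kraus (kraus_indices dsA) N ?sA (lift_kraus dsA)"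
  define K2 where "K2 = kraus (UNIV :: unit set) N N (\<lambda>_ p a. (VB * W) $$ (p, a))"
  define K3 where "K3 = kraus (kraus_indices dsB) ?sB N (ptrace_kraus dsB)"
  have \<Phi>: "?\<Phi> Y = K3 (K2 (K1 Y))" for Y
    unfolding K1_def K2_def K3_def by (rule conj_ptrace_lift_eq_kraus[OF decA decB W(1)])
  show ?thesis
    unfolding cptp_map_def
  proof (intro conjI ballI allI impI)
    fix X assume "X \<in> block_alg (left_dims dsA)"
    show "?\<Phi> X \<in> block_alg (left_dims dsB)" by (rule partial_trace_vN_mem_block_alg)
  next
    fix X Y c a assume "X \<in> block_alg (left_dims dsA)" "Y \<in> block_alg (left_dims dsA)"
    then show "?\<Phi> (c \<cdot>\<^sub>m X + a \<cdot>\<^sub>m Y) = c \<cdot>\<^sub>m ?\<Phi> X + a \<cdot>\<^sub>m ?\<Phi> Y"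
      unfolding \<Phi> K1_def K2_def K3_def by (simp add: kraus_linear block_alg_carrier)
  next
    fix X assume "X \<in> block_alg (left_dims dsA)"
    then have "mtrace (ptrace_lift dsA X) = mtrace X"
      by (intro mtrace_ptrace_lift VA(5) block_alg_carrier)
    then show "mtrace (?\<Phi> X) = mtrace X"
      using VA(4) VB W ptrace_lift_carrier[of dsA X]
      by (simp add: mtrace_partial_trace_vN mtrace_unitary_conj)
  next
    fix k X assume X: "X \<in> carrier_mat (k * ?sA) (k * ?sA)" "psd X"
    have "ampliate k ?sA ?sB ?\<Phi> X = ampliate k N ?sB K3 (ampliate k N N K2 (ampliate k ?sA N K1 X))"
      unfolding \<Phi> K1_def K2_def by (simp add: ampliate_comp[where Db = N])
    also have "psd \<dots>"
      unfolding K1_def K2_def K3_def using X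
      by (intro psd_ampliate_kraus) (simp_all add: ampliate_carrier)
    finally show "psd (ampliate k ?sA ?sB ?\<Phi> X)" .
  qed
qed

lemma heisenberg_semicausal_partial_trace_eq:
  assumes A: "A \<subseteq> carrier_mat n n" and B: "B \<subseteq> carrier_mat n n" and U: "unitary_mat n n U"
    and decA: "vN_decomposition n A VA dsA" and decB: "vN_decomposition n (commutant n B) VB dsB"
    and H: "heisenberg_semicausal U A B"
    and \<rho>: "\<rho> \<in> carrier_mat n n" and \<sigma>: "\<sigma> \<in> carrier_mat n n"
    and eq: "partial_trace_vN VA dsA \<rho> = partial_trace_vN VA dsA \<sigma>"
  shows "partial_trace_vN VB dsB (U * \<rho> * mat_adjoint U) = partial_trace_vN VB dsB (U * \<sigma> * mat_adjoint U)"
proof -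
  note VA = vN_decompositionD[OF decA] and VB = vN_decompositionD[OF decB]
  have Uc: "U \<in> carrier_mat n n" using unitary_matD[OF U] by simp
  have \<rho>\<sigma>: "\<rho> - \<sigma> \<in> carrier_mat n n" using \<sigma> by (rule minus_carrier_mat)
  have "partial_trace_vN VA dsA (\<rho> - \<sigma>) = 0\<^sub>m (sum_list (left_dims dsA)) (sum_list (left_dims dsA))"
    using partial_trace_vN_diff[OF VA(1) \<rho> \<sigma> VA(4)] eq partial_trace_vN_carrier by simp
  then have "\<forall>D\<in>commutant n A. mtrace (D * (\<rho> - \<sigma>)) = 0"
    using partial_trace_vN_eq_0_iff[OF decA \<rho>\<sigma>] by simp
  then have "\<forall>D\<in>commutant n (commutant n B). mtrace (D * (U * (\<rho> - \<sigma>) * mat_adjoint U)) = 0"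
    using heisenberg_semicausal_conj_bicommutant[OF U A B H] mtrace_mult_conj[OF Uc _ \<rho>\<sigma>]
      commutant_carrier by simp
  then have "partial_trace_vN VB dsB (U * (\<rho> - \<sigma>) * mat_adjoint U) =
    0\<^sub>m (sum_list (left_dims dsB)) (sum_list (left_dims dsB))"
    using partial_trace_vN_eq_0_iff[OF decB] Uc \<rho>\<sigma> by simp
  moreover have "U * (\<rho> - \<sigma>) * mat_adjoint U = U * \<rho> * mat_adjoint U - U * \<sigma> * mat_adjoint U"
    using Uc \<rho> \<sigma> by (rule conj_diff_mat)
  ultimately show ?thesis
    using partial_trace_vN_diff[OF VB(1), of "U * \<rho> * mat_adjoint U" "U * \<sigma> * mat_adjoint U"]
      VB(4) Uc \<rho> \<sigma> partial_trace_vN_carrier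
    by (simp add: mat_minus_eq_0_iff)
qed

lemma heisenberg_imp_schroedinger:
  assumes A: "A \<subseteq> carrier_mat n n" and B: "B \<subseteq> carrier_mat n n" and U: "unitary_mat n n U"
    and decA: "vN_decomposition n A VA dsA" and decB: "vN_decomposition n (commutant n B) VB dsB"
    and H: "heisenberg_semicausal U A B"
  shows "schroedinger_semicausal n (\<lambda>\<rho>. U * \<rho> * mat_adjoint U) VA dsA VB dsB"
proof -
  note VA = vN_decompositionD[OF decA]
  have Uc: "U \<in> carrier_mat n n" using unitary_matD[OF U] by simp
  define W where "W = U * mat_adjoint VA"
  have W: "unitary_mat n n W"
    using decA unfolding W_def vN_decomposition_def by (intro unitary_mat_mult U unitary_mat_adjoint) simp
  define E' where "E' Y = partial_trace_vN VB dsB (W * ptrace_lift dsA Y * mat_adjoint W)" for Y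
  have "partial_trace_vN VB dsB (U * \<rho> * mat_adjoint U) = E' (partial_trace_vN VA dsA \<rho>)"
    if \<rho>: "\<rho> \<in> carrier_mat n n" for \<rho>
  proof -
    define \<sigma> where "\<sigma> = mat_adjoint VA * ptrace_lift dsA (partial_trace_vN VA dsA \<rho>) * VA"
    have \<sigma>: "\<sigma> \<in> carrier_mat n n"
      unfolding \<sigma>_def using VA ptrace_lift_carrier by (metis mat_adjoint_carrier mult_carrier_mat_square)
    have "partial_trace_vN VA dsA \<sigma> = partial_trace_vN VA dsA \<rho>"
      unfolding \<sigma>_def by (rule partial_trace_vN_ptrace_lift[OF VA(1,3,4,5) partial_trace_vN_mem_block_alg])
    then have "partial_trace_vN VB dsB (U * \<rho> * mat_adjoint U) = partial_trace_vN VB dsB (U * \<sigma> * mat_adjoint U)"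
      using heisenberg_semicausal_partial_trace_eq[OF A B U decA decB H \<rho> \<sigma>] by simp
    also have "\<dots> = E' (partial_trace_vN VA dsA \<rho>)"
      unfolding E'_def \<sigma>_def W_def using Uc VA ptrace_lift_carrier[of dsA]
      by (simp add: mat_adjoint_mult[of _ n n _ n] assoc_mult_mat[of _ n n _ n _ n])
    finally show ?thesis .
  qed
  moreover have "cptp_map (left_dims dsA) (left_dims dsB) E'"
    unfolding E'_def by (rule cptp_map_conj_ptrace_lift[OF decA decB W])
  ultimately show ?thesis unfolding schroedinger_semicausal_def by blast
qed

theorem mainTheorem4:
  fixes n m :: nat and U :: "complex mat" and A B :: "complex mat set"
    and VA VB :: "complex mat" and dsA dsB :: "(nat \<times> nat) list"
  assumes "vN_algebra n A" and "vN_algebra m B"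
    and "unitary_mat m n U"
    and "vN_decomposition n A VA dsA"
    and "vN_decomposition m (commutant m B) VB dsB"
  shows "heisenberg_semicausal U A B \<longleftrightarrow>
         schroedinger_semicausal n (\<lambda>\<rho>. U * \<rho> * mat_adjoint U) VA dsA VB dsB"
proof -
  have "m = n" using assms(3) by (rule unitary_mat_square)
  then have A: "A \<subseteq> carrier_mat n n" and B: "B \<subseteq> carrier_mat n n"
    using assms(1,2) unfolding vN_algebra_def by auto
  show ?thesis
    using heisenberg_imp_schroedinger[OF A B] schroedinger_imp_heisenberg[OF A B] assms(3-5) \<open>m = n\<close>
    by blast
qed

end
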